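(* Let $D$ be a unital commutative C*-algebra and $\Delta\subseteq\mathrm{T}(D)$ a closed convex set of tracial states whose set of extreme points $\partial\Delta$ is compact. Suppose $\Delta$ is ample with respect to a nonzero positive contraction $c=\overline{(c_n)}\in\ell^\infty(D)/J_{2,\omega,\Delta}$, where $(c_n)\in\ell^\infty(D)$ is a representative. Then $\lim_{k\to\omega}\sup_{\tau\in\partial\Delta}|\tau(ac_k)-\tau(a)\tau(c_k)|=0$ for every $a\in D$.
   Context: $\omega$ is a free ultrafilter on $\mathbb N$; $J_{2,\omega,\Delta}=\{(f_n)\in\ell^\infty(D):\lim_{n\to\omega}\sup_{\tau\in\Delta}\tau(|f_n|^2)=0\}$. For a sequence $(\tau_n)$ in $\Delta$, $(\tau_n)_\omega$ denotes the trace $(a_n)\mapsto\lim_{n\to\omega}\tau_n(a_n)$ on $\ell^\infty(D)$ (it vanishes on $J_{2,\omega,\Delta}$); elements of $D$ are regarded as constant sequences. $\Delta$ is ample with respect to $c$ if for every sequence $(\tau_n)$ in $\Delta$ the functionals $x\mapsto(\tau_n)_\omega(xc)/(\tau_n)_\omega(c)$ and $x\mapsto(\tau_n)_\omega(x(1-c))/(1-(\tau_n)_\omega(c))$ on $D$ belong to $\Delta$ (when $(\tau_n)_\omega(c)=0$ only the second is required; when it equals $1$ only the first). *)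

theory Defs
  imports "HOL-Analysis.Analysis"
begin

text \<open>A unital commutative C*-algebra: the carrier type 'a is a commutative unital
  real Banach algebra (norm 1 = 1), equipped with a complex scalar multiplication
  scC extending the real one, and an involution st satisfying the C*-identity.\<close>

definition comm_cstar_alg ::
  "(complex \<Rightarrow> 'a::{comm_ring_1,real_normed_algebra_1,banach} \<Rightarrow> 'a) \<Rightarrow> ('a \<Rightarrow> 'a) \<Rightarrow> bool" where
  "comm_cstar_alg scC st \<longleftrightarrow>
     (\<forall>z w x. scC z (scC w x) = scC (z * w) x) \<and>
     (\<forall>z x y. scC z (x + y) = scC z x + scC z y) \<and>
     (\<forall>z w x. scC (z + w) x = scC z x + scC w x) \<and>
     (\<forall>r x. scC (complex_of_real r) x = r *\<^sub>R x) \<and>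
     (\<forall>z x y. scC z (x * y) = scC z x * y) \<and>
     (\<forall>z x. norm (scC z x) = cmod z * norm x) \<and>
     (\<forall>x. st (st x) = x) \<and>
     (\<forall>x y. st (x + y) = st x + st y) \<and>
     (\<forall>z x. st (scC z x) = scC (cnj z) (st x)) \<and>
     (\<forall>x y. st (x * y) = st y * st x) \<and>
     (\<forall>x. norm (st x * x) = (norm x)\<^sup>2)"

definition tracial_states ::
  "(complex \<Rightarrow> 'a::{comm_ring_1,real_normed_algebra_1,banach} \<Rightarrow> 'a) \<Rightarrow> ('a \<Rightarrow> 'a) \<Rightarrow> ('a \<Rightarrow> complex) set" where
  "tracial_states scC st = {\<tau>.
     (\<forall>x y. \<tau> (x + y) = \<tau> x + \<tau> y) \<and>
     (\<forall>z x. \<tau> (scC z x) = z * \<tau> x) \<and>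
     (\<forall>x. Im (\<tau> (st x * x)) = 0 \<and> 0 \<le> Re (\<tau> (st x * x))) \<and>
     \<tau> 1 = 1 \<and>
     (\<forall>x y. \<tau> (x * y) = \<tau> (y * x))}"

definition fconvex :: "('a \<Rightarrow> complex) set \<Rightarrow> bool" where
  "fconvex S \<longleftrightarrow> (\<forall>\<sigma>\<in>S. \<forall>\<rho>\<in>S. \<forall>t::real. 0 \<le> t \<and> t \<le> 1 \<longrightarrow>
      (\<lambda>x. complex_of_real t * \<sigma> x + complex_of_real (1 - t) * \<rho> x) \<in> S)"

definition fextreme_points :: "('a \<Rightarrow> complex) set \<Rightarrow> ('a \<Rightarrow> complex) set" where
  "fextreme_points S = {\<tau>\<in>S. \<forall>\<sigma>\<in>S. \<forall>\<rho>\<in>S. \<forall>t::real. 0 < t \<and> t < 1 \<and>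
      \<tau> = (\<lambda>x. complex_of_real t * \<sigma> x + complex_of_real (1 - t) * \<rho> x) \<longrightarrow> \<sigma> = \<rho>}"

definition free_ultrafilter :: "nat filter \<Rightarrow> bool" where
  "free_ultrafilter F \<longleftrightarrow> F \<noteq> bot \<and> (\<forall>P. eventually P F \<or> eventually (\<lambda>n. \<not> P n) F) \<and>
      (\<forall>m. eventually (\<lambda>n. n \<noteq> m) F)"

definition sup0 :: "real set \<Rightarrow> real" where
  "sup0 S = (if S = {} then 0 else Sup S)"

definition linfty :: "(nat \<Rightarrow> 'a::real_normed_vector) set" where
  "linfty = {f. \<exists>B. \<forall>n. norm (f n) \<le> B}"

definition linfty_norm :: "(nat \<Rightarrow> 'a::real_normed_vector) \<Rightarrow> real" where
  "linfty_norm f = Sup (range (\<lambda>n. norm (f n)))"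

definition J2 :: "('a \<Rightarrow> 'a) \<Rightarrow> nat filter \<Rightarrow> ('a \<Rightarrow> complex) set
     \<Rightarrow> (nat \<Rightarrow> 'a::{comm_ring_1,real_normed_algebra_1,banach}) set" where
  "J2 st \<omega> \<Delta> = {f \<in> linfty.
      ((\<lambda>n. sup0 ((\<lambda>\<tau>. Re (\<tau> (st (f n) * f n))) ` \<Delta>)) \<longlongrightarrow> 0) \<omega>}"

definition ulim_trace :: "nat filter \<Rightarrow> (nat \<Rightarrow> 'a \<Rightarrow> complex) \<Rightarrow> (nat \<Rightarrow> 'a) \<Rightarrow> complex" where
  "ulim_trace \<omega> \<tau>s a = Lim \<omega> (\<lambda>n. \<tau>s n (a n))"

definition ample :: "nat filter \<Rightarrow> ('a \<Rightarrow> complex) set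
     \<Rightarrow> (nat \<Rightarrow> 'a::{comm_ring_1,real_normed_algebra_1,banach}) \<Rightarrow> bool" where
  "ample \<omega> \<Delta> c \<longleftrightarrow> (\<forall>\<tau>s. (\<forall>n. \<tau>s n \<in> \<Delta>) \<longrightarrow>
      (ulim_trace \<omega> \<tau>s c \<noteq> 0 \<longrightarrow>
         (\<lambda>x. ulim_trace \<omega> \<tau>s (\<lambda>n. x * c n) / ulim_trace \<omega> \<tau>s c) \<in> \<Delta>) \<and>
      (ulim_trace \<omega> \<tau>s c \<noteq> 1 \<longrightarrow>
         (\<lambda>x. ulim_trace \<omega> \<tau>s (\<lambda>n. x * (1 - c n)) / (1 - ulim_trace \<omega> \<tau>s c)) \<in> \<Delta>))"

text \<open>The class of c in ell-infinity(D)/J is a positive contraction: it is of the form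
  d* d modulo J, and its quotient norm is at most 1.\<close>
definition quot_pos_contraction :: "('a \<Rightarrow> 'a) \<Rightarrow> (nat \<Rightarrow> 'a) set
     \<Rightarrow> (nat \<Rightarrow> 'a::{comm_ring_1,real_normed_algebra_1,banach}) \<Rightarrow> bool" where
  "quot_pos_contraction st J c \<longleftrightarrow>
     (\<exists>d\<in>linfty. (\<lambda>n. c n - st (d n) * d n) \<in> J) \<and>
     Inf ((\<lambda>j. linfty_norm (\<lambda>n. c n + j n)) ` J) \<le> 1"

end

(*
  Along the ultrafilter it suffices to show that the defect |tau_k(a c_k) - tau_k(a) tau_k(c_k)|
  tends to 0 for every sequence tau_k of extreme points (pick tau_k nearly attaining the
  supremum). By compactness of the extreme boundary, tau_k converges along omega to an extreme
  point tau. The omega-limits x |-> lim tau_k(x c_k) and x |-> lim tau_k(x (1 - c_k)) are positive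
  functionals (c is d* d modulo J_2, and its quotient norm is at most 1) adding up to tau. With
  t = lim tau_k(c_k) in [0, 1], ampleness puts their normalisations into Delta, and tau is the
  convex combination of the two with weights t and 1 - t; extremality forces
  lim tau_k(x c_k) = t tau(x), so the defect vanishes in the limit.
*)

theory Submission
  imports Defs "HOL-Computational_Algebra.Formal_Power_Series"
begin

lemma abs_gbinomial_half_le_one: "\<bar>(1/2::real) gchoose n\<bar> \<le> 1"
proof (induct n)
  case (Suc k)
  have "real (Suc k) * ((1/2) gchoose Suc k) = (1/2 - real k) * ((1/2::real) gchoose k)"
    using gbinomial_mult_1[of "1/2::real" k] by (simp add: algebra_simps)
  then have "real (Suc k) * \<bar>(1/2) gchoose Suc k\<bar> = \<bar>1/2 - real k\<bar> * \<bar>(1/2::real) gchoose k\<bar>"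
    by (metis abs_mult abs_of_nat)
  also have "\<dots> \<le> real (Suc k) * 1"
    by (intro mult_mono Suc) auto
  finally show ?case by simp
qed simp

lemma one_gchoose: "(1::real) gchoose n = (if n \<le> 1 then 1 else 0)"
  using binomial_gbinomial[of 1 n, where 'a = real] by (cases n) (auto simp: binomial_eq_0)

locale comm_cstar =
  fixes scC :: "complex \<Rightarrow> 'a::{comm_ring_1,real_normed_algebra_1,banach} \<Rightarrow> 'a"
    and st :: "'a \<Rightarrow> 'a"
  assumes comm_cstar_alg: "comm_cstar_alg scC st"
begin

lemma scC_scC: "scC z (scC w x) = scC (z * w) x"
  and scC_of_real: "scC (complex_of_real r) x = r *\<^sub>R x"
  and scC_mult: "scC z (x * y) = scC z x * y"
  and st_st [simp]: "st (st x) = x"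
  and st_add: "st (x + y) = st x + st y"
  and st_scC: "st (scC z x) = scC (cnj z) (st x)"
  and st_mult: "st (x * y) = st y * st x"
  and norm_st_mult_self: "norm (st x * x) = (norm x)\<^sup>2"
  using comm_cstar_alg unfolding comm_cstar_alg_def by auto

lemma scC_one [simp]: "scC 1 x = x"
  using scC_of_real[of 1 x] by simp

lemma scC_mult_right: "scC z (x * y) = x * scC z y"
  by (metis scC_mult mult.commute)

lemma st_scaleR: "st (r *\<^sub>R x) = r *\<^sub>R st x"
  using st_scC[of "complex_of_real r" x] by (simp add: scC_of_real)

lemma st_one [simp]: "st 1 = 1"
  using st_mult[of "st 1" 1] by simp

lemma st_minus: "st (- x) = - st x"
  using st_scaleR[of "-1" x] by simp

lemma st_power: "st (x ^ n) = st x ^ n"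
  by (induct n) (auto simp: st_mult mult.commute)

lemma norm_st [simp]: "norm (st x) = norm x"
proof -
  have le: "norm y \<le> norm (st y)" for y
  proof (cases "y = 0")
    case False
    have "(norm y)\<^sup>2 \<le> norm (st y) * norm y"
      using norm_st_mult_self[of y] norm_mult_ineq[of "st y" y] by simp
    then show ?thesis using False by (simp add: power2_eq_square)
  qed simp
  show ?thesis using le[of x] le[of "st x"] by simp
qed

lemma bounded_linear_st: "bounded_linear st"
  by (rule bounded_linear_intro[where K = 1]) (auto simp: st_add st_scaleR)

lemma st_add_scC_one_mult_self:
  "st (x + scC l 1) * (x + scC l 1) = st x * x + scC l (st x) + scC (cnj l) x + scC (cnj l * l) 1"
proof -
  have st_sum: "st (x + scC l 1) = st x + scC (cnj l) 1" by (simp add: st_add st_scC)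
  have "st x * scC l 1 = scC l (st x)" using scC_mult_right[of l "st x" 1] by simp
  moreover have "scC (cnj l) 1 * x = scC (cnj l) x" using scC_mult[of "cnj l" 1 x] by simp
  moreover have "scC (cnj l) 1 * scC l 1 = scC (cnj l * l) 1"
    using scC_mult[of "cnj l" 1 "scC l 1"] scC_scC[of "cnj l" l 1] by simp
  ultimately show ?thesis unfolding st_sum by (simp add: algebra_simps)
qed

lemma exists_st_mult_self_eq_one_minus:
  assumes self_adjoint: "st h = h" and norm_h: "norm h < 1"
  shows "\<exists>w. st w * w = 1 - h"
proof -
  define a where "a n = ((1/2::real) gchoose n) *\<^sub>R (- h) ^ n" for n
  have norm_a: "norm (a n) \<le> norm h ^ n" for n
  proof -
    have "norm (a n) = \<bar>(1/2::real) gchoose n\<bar> * norm ((- h) ^ n)" unfolding a_def by simp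
    also have "\<dots> \<le> 1 * norm h ^ n"
      by (intro mult_mono abs_gbinomial_half_le_one) (auto simp: norm_power_ineq[of "- h", simplified])
    finally show ?thesis by simp
  qed
  have summable_norm_a: "summable (\<lambda>n. norm (a n))"
    by (rule summable_comparison_test[OF _ summable_geometric[of "norm h"]]) (use norm_a norm_h in auto)
  define w where "w = suminf a"
  \<comment> \<open>\<open>w\<close> is the binomial series of \<open>(1 - h)\<^sup>1\<^sup>/\<^sup>2\<close>; Vandermonde's identity squares it to \<open>1 - h\<close>.\<close>
  have Cauchy_coeff: "(\<Sum>i\<le>k. a i * a (k - i)) = ((1::real) gchoose k) *\<^sub>R (- h) ^ k" for k
  proof -
    have "(\<Sum>i\<le>k. a i * a (k - i))
        = (\<Sum>i\<le>k. ((1/2::real) gchoose i) * ((1/2) gchoose (k - i))) *\<^sub>R (- h) ^ k"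
      unfolding scaleR_sum_left
    proof (rule sum.cong)
      fix i assume "i \<in> {..k}"
      then have "(- h) ^ i * (- h) ^ (k - i) = (- h) ^ k" by (simp add: power_add[symmetric])
      then show "a i * a (k - i) = (((1/2::real) gchoose i) * ((1/2) gchoose (k - i))) *\<^sub>R (- h) ^ k"
        unfolding a_def by (simp add: mult.commute)
    qed simp
    also have "(\<Sum>i\<le>k. ((1/2::real) gchoose i) * ((1/2) gchoose (k - i))) = (1::real) gchoose k"
      using gbinomial_Vandermonde[of "1/2::real" "1/2" k] by (simp add: atLeast0AtMost)
    finally show ?thesis .
  qed
  have "(\<lambda>k. ((1::real) gchoose k) *\<^sub>R (- h) ^ k) sums (w * w)"
    using Cauchy_product_sums[OF summable_norm_a summable_norm_a] unfolding w_def Cauchy_coeff .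
  moreover have "(\<lambda>k. ((1::real) gchoose k) *\<^sub>R (- h) ^ k) sums (1 - h)"
    using sums_finite[of "{0, 1}" "\<lambda>k. ((1::real) gchoose k) *\<^sub>R (- h) ^ k"]
    by (simp add: one_gchoose)
  ultimately have w_square: "w * w = 1 - h" by (rule sums_unique2)
  have "st w = (\<Sum>n. st (a n))"
    unfolding w_def using summable_norm_cancel[OF summable_norm_a]
    by (rule bounded_linear.suminf[OF bounded_linear_st])
  also have "(\<lambda>n. st (a n)) = a" unfolding a_def by (auto simp: st_scaleR st_power st_minus self_adjoint)
  finally have "st w = w" unfolding w_def .
  then show ?thesis using w_square by (intro exI[of _ w]) simp
qed

definition positive_functional :: "('a \<Rightarrow> complex) \<Rightarrow> bool" where
  "positive_functional \<phi> \<longleftrightarrow> (\<forall>x y. \<phi> (x + y) = \<phi> x + \<phi> y) \<and> (\<forall>z x. \<phi> (scC z x) = z * \<phi> x) \<and>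
     (\<forall>x. Im (\<phi> (st x * x)) = 0 \<and> 0 \<le> Re (\<phi> (st x * x)))"

context
  fixes \<phi> :: "'a \<Rightarrow> complex"
  assumes positive: "positive_functional \<phi>"
begin

lemma positive_functional_add: "\<phi> (x + y) = \<phi> x + \<phi> y"
  and positive_functional_scC: "\<phi> (scC z x) = z * \<phi> x"
  and positive_functional_Im: "Im (\<phi> (st x * x)) = 0"
  and positive_functional_Re: "0 \<le> Re (\<phi> (st x * x))"
  using positive unfolding positive_functional_def by blast+

lemma positive_functional_scaleR: "\<phi> (r *\<^sub>R x) = complex_of_real r * \<phi> x"
  using positive_functional_scC[of "complex_of_real r" x] by (simp add: scC_of_real)

lemma positive_functional_minus: "\<phi> (- x) = - \<phi> x"
  using positive_functional_scaleR[of "-1" x] by simp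

lemma positive_functional_diff: "\<phi> (x - y) = \<phi> x - \<phi> y"
  by (metis diff_conv_add_uminus positive_functional_add positive_functional_minus)

lemma positive_functional_one: "Im (\<phi> 1) = 0" "0 \<le> Re (\<phi> 1)"
  using positive_functional_Im[of 1] positive_functional_Re[of 1] by simp_all

lemma positive_functional_shifted_square:
  "\<phi> (st (x + scC l 1) * (x + scC l 1)) = \<phi> (st x * x) + l * \<phi> (st x) + cnj l * \<phi> x + cnj l * l * \<phi> 1"
  unfolding st_add_scC_one_mult_self by (simp add: positive_functional_add positive_functional_scC)

lemma positive_functional_st: "\<phi> (st x) = cnj (\<phi> x)"
proof -
  have "Im (\<phi> (st (x + scC l 1) * (x + scC l 1))) = 0" for l
    by (rule positive_functional_Im)
  from this[of 1] this[of \<i>] show ?thesis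
    unfolding positive_functional_shifted_square
    using positive_functional_Im[of x] positive_functional_one by (simp add: complex_eq_iff)
qed

lemma positive_functional_Cauchy_Schwarz: "(cmod (\<phi> x))\<^sup>2 \<le> Re (\<phi> 1) * Re (\<phi> (st x * x))"
proof -
  define b where "b = (cmod (\<phi> x))\<^sup>2"
  define P where "P = Re (\<phi> 1)"
  define Q where "Q = Re (\<phi> (st x * x))"
  have P: "0 \<le> P" unfolding P_def using positive_functional_one by simp
  have quadratic: "0 \<le> Q - 2 * r * b + r\<^sup>2 * b * P" for r :: real
  proof -
    define l where "l = complex_of_real (- r) * \<phi> x"
    have xx: "cnj (\<phi> x) * \<phi> x = complex_of_real b"
      unfolding b_def using complex_norm_square[of "\<phi> x"] by (simp add: mult.commute)
    have e1: "l * cnj (\<phi> x) = complex_of_real (- r * b)"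
      and e2: "cnj l * \<phi> x = complex_of_real (- r * b)"
      and e3: "cnj l * l = complex_of_real (r\<^sup>2 * b)"
      unfolding l_def using xx by (simp_all add: power2_eq_square mult_ac)
    have "0 \<le> Re (\<phi> (st (x + scC l 1) * (x + scC l 1)))" by (rule positive_functional_Re)
    then show ?thesis
      unfolding positive_functional_shifted_square positive_functional_st e1 e2 e3
      using positive_functional_one by (simp add: P_def Q_def algebra_simps)
  qed
  show ?thesis
  proof (cases "P = 0")
    case True
    have "b \<le> 0"
    proof (rule ccontr)
      assume "\<not> b \<le> 0"
      with quadratic[of "(Q + 1) / (2 * b)"] True show False by (simp add: field_simps)
    qed
    then show ?thesis using True by (simp add: b_def P_def)
  next
    case False
    with P have "0 < P" by simp
    with quadratic[of "1 / P"] show ?thesis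
      by (simp add: b_def P_def Q_def field_simps power2_eq_square)
  qed
qed

lemma positive_functional_eq_zero: "\<phi> 1 = 0 \<Longrightarrow> \<phi> x = 0"
  using positive_functional_Cauchy_Schwarz[of x] by simp

lemma positive_functional_Re_st_mult_self_le: "Re (\<phi> (st x * x)) \<le> (norm x)\<^sup>2 * Re (\<phi> 1)"
proof -
  define B where "B = Re (\<phi> (st x * x))"
  define P where "P = Re (\<phi> 1)"
  define n where "n = (norm x)\<^sup>2"
  have P: "0 \<le> P" unfolding P_def using positive_functional_one by simp
  \<comment> \<open>For \<open>s > \<parallel>x\<parallel>\<^sup>2\<close> the element \<open>1 - x\<^sup>* x / s\<close> is a square \<open>w\<^sup>* w\<close>, so \<open>\<phi> (x\<^sup>* x) \<le> s \<phi> 1\<close>.\<close>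
  have bound: "B \<le> s * P" if "n < s" for s
  proof -
    have s: "0 < s" using that zero_le_power2[of "norm x"] unfolding n_def by linarith
    define h where "h = (1 / s) *\<^sub>R (st x * x)"
    have "st h = h" unfolding h_def by (simp add: st_scaleR st_mult)
    moreover have "norm h < 1" unfolding h_def using s that by (simp add: norm_st_mult_self n_def)
    ultimately obtain w where w: "st w * w = 1 - h" using exists_st_mult_self_eq_one_minus by blast
    have "0 \<le> Re (\<phi> (st w * w))" by (rule positive_functional_Re)
    also have "\<phi> (st w * w) = \<phi> 1 - complex_of_real (1 / s) * \<phi> (st x * x)"
      unfolding w h_def by (simp add: positive_functional_diff positive_functional_scaleR)
    finally show ?thesis using s by (simp add: B_def P_def field_simps)
  qed
  have "((\<lambda>s. s * P) \<longlongrightarrow> n * P) (at_right n)"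
    by (intro tendsto_mult_right tendsto_ident_at)
  moreover have "eventually (\<lambda>s. B \<le> s * P) (at_right n)"
    using eventually_at_right_less by (rule eventually_mono) (rule bound)
  ultimately have "B \<le> n * P" by (rule tendsto_lowerbound) simp
  then show ?thesis by (simp add: B_def n_def P_def)
qed

lemma positive_functional_norm_le: "cmod (\<phi> x) \<le> Re (\<phi> 1) * norm x"
proof -
  have P: "0 \<le> Re (\<phi> 1)" using positive_functional_one by simp
  have "(cmod (\<phi> x))\<^sup>2 \<le> Re (\<phi> 1) * Re (\<phi> (st x * x))" by (rule positive_functional_Cauchy_Schwarz)
  also have "\<dots> \<le> Re (\<phi> 1) * ((norm x)\<^sup>2 * Re (\<phi> 1))"
    by (rule mult_left_mono[OF positive_functional_Re_st_mult_self_le P])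
  also have "\<dots> = (Re (\<phi> 1) * norm x)\<^sup>2" by (simp add: power2_eq_square)
  finally show ?thesis by (rule power2_le_imp_le) (use P in simp)
qed

lemma positive_functional_weighted: "positive_functional (\<lambda>x. \<phi> (st y * y * x))"
  unfolding positive_functional_def
proof (intro conjI allI)
  fix x
  have "st y * y * (st x * x) = st (x * y) * (x * y)" by (simp add: st_mult algebra_simps)
  then show "Im (\<phi> (st y * y * (st x * x))) = 0" "0 \<le> Re (\<phi> (st y * y * (st x * x)))"
    by (simp_all add: positive_functional_Im positive_functional_Re)
next
  fix z x
  show "\<phi> (st y * y * scC z x) = z * \<phi> (st y * y * x)"
    using positive_functional_scC[of z "st y * y * x"] by (simp add: scC_mult_right)
qed (simp add: distrib_left positive_functional_add)

lemma positive_functional_weighted_norm_le: "cmod (\<phi> (st y * y * x)) \<le> Re (\<phi> (st y * y)) * norm x"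
  using comm_cstar.positive_functional_norm_le[OF comm_cstar_axioms positive_functional_weighted] by simp

end

lemma positive_functional_limit:
  assumes nontrivial: "F \<noteq> bot"
    and positive: "\<And>n. positive_functional (\<phi>s n)"
    and lim: "\<And>x. ((\<lambda>n. \<phi>s n x) \<longlongrightarrow> \<phi> x) F"
  shows "positive_functional \<phi>"
  unfolding positive_functional_def
proof (intro conjI allI)
  fix x y
  have "((\<lambda>n. \<phi>s n (x + y)) \<longlongrightarrow> \<phi> x + \<phi> y) F"
    using tendsto_add[OF lim lim] by (simp add: positive_functional_add[OF positive])
  then show "\<phi> (x + y) = \<phi> x + \<phi> y" by (rule tendsto_unique[OF nontrivial lim])
next
  fix z x
  have "((\<lambda>n. \<phi>s n (scC z x)) \<longlongrightarrow> z * \<phi> x) F"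
    using tendsto_mult_left[OF lim] by (simp add: positive_functional_scC[OF positive])
  then show "\<phi> (scC z x) = z * \<phi> x" by (rule tendsto_unique[OF nontrivial lim])
next
  fix x
  have "((\<lambda>n. Im (\<phi>s n (st x * x))) \<longlongrightarrow> Im (\<phi> (st x * x))) F" by (rule tendsto_Im[OF lim])
  then show "Im (\<phi> (st x * x)) = 0"
    by (simp add: positive_functional_Im[OF positive] tendsto_const_iff[OF nontrivial])
  show "0 \<le> Re (\<phi> (st x * x))"
    by (rule tendsto_lowerbound[OF tendsto_Re[OF lim]])
      (simp_all add: positive_functional_Re[OF positive] nontrivial)
qed

lemma tracial_state_positive: "\<tau> \<in> tracial_states scC st \<Longrightarrow> positive_functional \<tau>"
  and tracial_state_one: "\<tau> \<in> tracial_states scC st \<Longrightarrow> \<tau> 1 = 1"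
  unfolding tracial_states_def positive_functional_def by blast+

context
  fixes \<tau> :: "'a \<Rightarrow> complex"
  assumes tracial: "\<tau> \<in> tracial_states scC st"
begin

lemma tracial_state_norm_le: "cmod (\<tau> x) \<le> norm x"
  using positive_functional_norm_le[OF tracial_state_positive[OF tracial]] tracial_state_one[OF tracial]
  by simp

lemma tracial_state_Re_st_mult_self_le: "Re (\<tau> (st x * x)) \<le> (norm x)\<^sup>2"
  using positive_functional_Re_st_mult_self_le[OF tracial_state_positive[OF tracial]]
    tracial_state_one[OF tracial]
  by simp

lemma tracial_state_mult_bound: "(cmod (\<tau> (z * j)))\<^sup>2 \<le> (norm z)\<^sup>2 * Re (\<tau> (st j * j))"
proof -
  have pos: "positive_functional \<tau>" by (rule tracial_state_positive[OF tracial])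
  have "(cmod (\<tau> (z * j)))\<^sup>2 \<le> Re (\<tau> (st (z * j) * (z * j)))"
    using positive_functional_Cauchy_Schwarz[OF pos] tracial_state_one[OF tracial] by simp
  also have "st (z * j) * (z * j) = st j * j * (st z * z)" by (simp add: st_mult algebra_simps)
  also have "Re (\<tau> (st j * j * (st z * z))) \<le> Re (\<tau> (st j * j)) * norm (st z * z)"
    by (rule order_trans[OF complex_Re_le_cmod positive_functional_weighted_norm_le[OF pos]])
  also have "\<dots> = (norm z)\<^sup>2 * Re (\<tau> (st j * j))" by (simp add: norm_st_mult_self)
  finally show ?thesis .
qed

lemma trace_defect_norm_le: "cmod (\<tau> (x * y) - \<tau> x * \<tau> y) \<le> 2 * (norm x * norm y)"
proof -
  have "cmod (\<tau> (x * y)) \<le> norm x * norm y"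
    using tracial_state_norm_le[of "x * y"] norm_mult_ineq[of x y] by simp
  moreover have "cmod (\<tau> x * \<tau> y) \<le> norm x * norm y"
    unfolding norm_mult by (intro mult_mono tracial_state_norm_le) auto
  ultimately show ?thesis using norm_triangle_ineq4[of "\<tau> (x * y)" "\<tau> x * \<tau> y"] by simp
qed

end

end

lemma linfty_add: "f \<in> linfty \<Longrightarrow> g \<in> linfty \<Longrightarrow> (\<lambda>n. f n + g n) \<in> linfty"
  unfolding linfty_def by (auto intro: order_trans[OF norm_triangle_ineq add_mono])

lemma linfty_mult_left:
  fixes f :: "nat \<Rightarrow> 'a::real_normed_algebra"
  shows "f \<in> linfty \<Longrightarrow> (\<lambda>n. x * f n) \<in> linfty"
  unfolding linfty_def
  by (auto intro: order_trans[OF norm_mult_ineq mult_left_mono[OF _ norm_ge_zero]])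

lemma linfty_one_minus:
  fixes f :: "nat \<Rightarrow> 'a::real_normed_algebra_1"
  shows "f \<in> linfty \<Longrightarrow> (\<lambda>n. 1 - f n) \<in> linfty"
  unfolding linfty_def by (auto intro: order_trans[OF norm_triangle_ineq4 add_left_mono])

lemma norm_le_linfty_norm:
  assumes "f \<in> linfty"
  shows "norm (f n) \<le> linfty_norm f"
proof -
  obtain B where "\<forall>n. norm (f n) \<le> B" using assms unfolding linfty_def by blast
  then have "bdd_above (range (\<lambda>n. norm (f n)))" by (auto intro: bdd_aboveI)
  then show ?thesis unfolding linfty_norm_def by (auto intro: cSup_upper)
qed

lemma free_ultrafilter_nontrivial: "free_ultrafilter \<omega> \<Longrightarrow> \<omega> \<noteq> bot"
  and free_ultrafilter_eventually_or_not:
    "free_ultrafilter \<omega> \<Longrightarrow> eventually P \<omega> \<or> eventually (\<lambda>n. \<not> P n) \<omega>"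
  unfolding free_ultrafilter_def by blast+

lemma free_ultrafilter_tendsto_compact:
  fixes f :: "nat \<Rightarrow> 'b::topological_space"
  assumes ultra: "free_ultrafilter \<omega>" and K: "compact K" and f: "\<And>n. f n \<in> K"
  obtains l where "l \<in> K" "(f \<longlongrightarrow> l) \<omega>"
proof -
  have "filtermap f \<omega> \<noteq> bot" using free_ultrafilter_nontrivial[OF ultra] by (simp add: filtermap_bot_iff)
  moreover have "eventually (\<lambda>x. x \<in> K) (filtermap f \<omega>)" by (simp add: eventually_filtermap f)
  ultimately obtain l where l: "l \<in> K" "inf (nhds l) (filtermap f \<omega>) \<noteq> bot"
    using K unfolding compact_filter by blast
  have "eventually (\<lambda>n. f n \<in> S) \<omega>" if S: "open S" "l \<in> S" for S
  proof (rule ccontr)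
    assume "\<not> eventually (\<lambda>n. f n \<in> S) \<omega>"
    then have "eventually (\<lambda>x. x \<notin> S) (filtermap f \<omega>)"
      using free_ultrafilter_eventually_or_not[OF ultra] by (auto simp: eventually_filtermap)
    moreover have "eventually (\<lambda>x. x \<in> S) (nhds l)" using S by (rule eventually_nhds_in_open)
    ultimately have "eventually (\<lambda>x. False) (inf (nhds l) (filtermap f \<omega>))"
      unfolding eventually_inf by blast
    with l(2) show False by (simp add: eventually_False)
  qed
  with l(1) that show ?thesis unfolding tendsto_def by blast
qed

lemma free_ultrafilter_tendsto_Lim:
  fixes u :: "nat \<Rightarrow> 'b::{real_normed_vector,heine_borel}"
  assumes ultra: "free_ultrafilter \<omega>" and bounded: "\<And>n. norm (u n) \<le> B"
  shows "(u \<longlongrightarrow> Lim \<omega> u) \<omega>"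
proof -
  obtain l where "(u \<longlongrightarrow> l) \<omega>"
    using free_ultrafilter_tendsto_compact[OF ultra compact_cball[of 0 B], of u] bounded by auto
  moreover have "\<not> trivial_limit \<omega>" using free_ultrafilter_nontrivial[OF ultra] by simp
  ultimately show ?thesis using tendsto_Lim by blast
qed

lemma tendsto_sup0_zeroI:
  fixes F :: "nat \<Rightarrow> 'b \<Rightarrow> real"
  assumes nonneg: "\<And>k x. x \<in> E \<Longrightarrow> 0 \<le> F k x"
    and bounded: "\<And>k. bdd_above (F k ` E)"
    and along: "\<And>xs. (\<And>k. xs k \<in> E) \<Longrightarrow> ((\<lambda>k. F k (xs k)) \<longlongrightarrow> 0) net"
  shows "((\<lambda>k. sup0 (F k ` E)) \<longlongrightarrow> 0) net"
proof (cases "E = {}")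
  case True
  then show ?thesis by (simp add: sup0_def)
next
  case False
  then obtain x0 where "x0 \<in> E" by blast
  then have sup0_nonneg: "0 \<le> sup0 (F k ` E)" for k
    using nonneg[of x0 k] cSup_upper[OF imageI[OF \<open>x0 \<in> E\<close>] bounded[of k]] False
    by (simp add: sup0_def)
  show ?thesis
  proof (rule tendstoI)
    fix e :: real
    assume "0 < e"
    have "\<exists>x. x \<in> E \<and> (e \<le> sup0 (F k ` E) \<longrightarrow> e / 2 < F k x)" for k
    proof (cases "e \<le> sup0 (F k ` E)")
      case True
      with \<open>0 < e\<close> False have "e / 2 < Sup (F k ` E)" by (simp add: sup0_def)
      then obtain y where "y \<in> F k ` E" "e / 2 < y" using False by (meson image_is_empty less_cSupE)
      then show ?thesis by blast
    qed (use False in blast)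
    then obtain xs where xs: "\<And>k. xs k \<in> E" "\<And>k. e \<le> sup0 (F k ` E) \<Longrightarrow> e / 2 < F k (xs k)"
      by metis
    have "((\<lambda>k. F k (xs k)) \<longlongrightarrow> 0) net" using xs(1) by (rule along)
    then have "eventually (\<lambda>k. F k (xs k) < e / 2) net" by (rule order_tendstoD(2)) (use \<open>0 < e\<close> in simp)
    then show "eventually (\<lambda>k. dist (sup0 (F k ` E)) 0 < e) net"
    proof (rule eventually_mono)
      fix k
      assume "F k (xs k) < e / 2"
      then have "\<not> e \<le> sup0 (F k ` E)" using xs(2)[of k] by fastforce
      then show "dist (sup0 (F k ` E)) 0 < e" using sup0_nonneg[of k] by (simp add: dist_real_def)
    qed
  qed
qed

lemma fextreme_points_convex_combination:
  assumes "\<tau> \<in> fextreme_points \<Delta>" "\<sigma> \<in> \<Delta>" "\<rho> \<in> \<Delta>" "0 < t" "t < 1"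
    and "\<tau> = (\<lambda>x. complex_of_real t * \<sigma> x + complex_of_real (1 - t) * \<rho> x)"
  shows "\<sigma> = \<tau>"
proof -
  have "\<sigma> = \<rho>" using assms unfolding fextreme_points_def by blast
  with assms(6) show ?thesis by (simp add: fun_eq_iff algebra_simps)
qed

lemma le_mult_Inf:
  fixes S :: "real set"
  assumes "S \<noteq> {}" "0 \<le> R" "\<And>r. r \<in> S \<Longrightarrow> x \<le> R * r"
  shows "x \<le> R * Inf S"
proof (cases "R = 0")
  case True
  with assms show ?thesis by auto
next
  case False
  with assms(2) have "0 < R" by simp
  have "x / R \<le> Inf S"
    using assms(1) by (rule cInf_greatest) (use assms(3) \<open>0 < R\<close> in \<open>simp add: divide_le_eq mult.commute\<close>)
  with \<open>0 < R\<close> show ?thesis by (simp add: divide_le_eq mult.commute)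
qed

locale ample_trace_setting = comm_cstar scC st
  for scC :: "complex \<Rightarrow> 'a::{comm_ring_1,real_normed_algebra_1,banach} \<Rightarrow> 'a" and st +
  fixes \<omega> :: "nat filter" and \<Delta> :: "('a \<Rightarrow> complex) set" and c :: "nat \<Rightarrow> 'a"
  assumes ultra: "free_ultrafilter \<omega>"
    and \<Delta>_tracial: "\<Delta> \<subseteq> tracial_states scC st"
    and c_bounded: "c \<in> linfty"
    and c_positive_contraction: "quot_pos_contraction st (J2 st \<omega> \<Delta>) c"
    and c_ample: "ample \<omega> \<Delta> c"
begin

lemma tendsto_ulim_trace:
  assumes "\<And>n. \<tau>s n \<in> \<Delta>" and "f \<in> linfty"
  shows "((\<lambda>n. \<tau>s n (f n)) \<longlongrightarrow> ulim_trace \<omega> \<tau>s f) \<omega>"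
proof -
  obtain B where "\<forall>n. norm (f n) \<le> B" using assms(2) unfolding linfty_def by blast
  then have "cmod (\<tau>s n (f n)) \<le> B" for n
    using assms(1) \<Delta>_tracial by (meson order_trans subsetD tracial_state_norm_le)
  then show ?thesis unfolding ulim_trace_def by (rule free_ultrafilter_tendsto_Lim[OF ultra])
qed

lemma Re_le_sup0_J2:
  assumes "\<tau> \<in> \<Delta>"
  shows "Re (\<tau> (st f * f)) \<le> sup0 ((\<lambda>\<tau>. Re (\<tau> (st f * f))) ` \<Delta>)"
proof -
  have "bdd_above ((\<lambda>\<tau>. Re (\<tau> (st f * f))) ` \<Delta>)"
    using \<Delta>_tracial by (intro bdd_aboveI[of _ "(norm f)\<^sup>2"]) (auto dest: tracial_state_Re_st_mult_self_le)
  with assms show ?thesis unfolding sup0_def by (auto intro: cSup_upper)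
qed

lemma tendsto_trace_mult_J2:
  assumes j: "j \<in> J2 st \<omega> \<Delta>" and \<tau>s: "\<And>n. \<tau>s n \<in> \<Delta>" and z: "z \<in> linfty"
  shows "((\<lambda>n. \<tau>s n (z n * j n)) \<longlongrightarrow> 0) \<omega>"
proof -
  define s where "s n = sup0 ((\<lambda>\<tau>. Re (\<tau> (st (j n) * j n))) ` \<Delta>)" for n
  obtain B where B: "\<And>n. norm (z n) \<le> B" using z unfolding linfty_def by blast
  have "0 \<le> B" using B[of 0] norm_ge_zero[of "z 0"] by linarith
  have "(s \<longlongrightarrow> 0) \<omega>" using j unfolding J2_def s_def by blast
  then have g_lim: "((\<lambda>n. B * sqrt (s n)) \<longlongrightarrow> 0) \<omega>"
    using tendsto_mult_left[OF tendsto_real_sqrt, of s 0 \<omega> B] by simp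
  have bound: "cmod (\<tau>s n (z n * j n)) \<le> B * sqrt (s n)" for n
  proof -
    have \<tau>: "\<tau>s n \<in> tracial_states scC st" using \<tau>s \<Delta>_tracial by blast
    have "(cmod (\<tau>s n (z n * j n)))\<^sup>2 \<le> (norm (z n))\<^sup>2 * Re (\<tau>s n (st (j n) * j n))"
      by (rule tracial_state_mult_bound[OF \<tau>])
    also have "\<dots> \<le> B\<^sup>2 * s n"
      using B[of n] Re_le_sup0_J2[OF \<tau>s, of n "j n"]
        positive_functional_Re[OF tracial_state_positive[OF \<tau>], of "j n"]
      unfolding s_def by (intro mult_mono power_mono) auto
    finally have "cmod (\<tau>s n (z n * j n)) \<le> sqrt (B\<^sup>2 * s n)" by (rule real_le_rsqrt)
    with \<open>0 \<le> B\<close> show ?thesis by (simp add: real_sqrt_mult)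
  qed
  show ?thesis by (rule Lim_null_comparison[OF always_eventually g_lim]) (simp add: bound)
qed

lemma zero_in_J2: "(\<lambda>n. 0) \<in> J2 st \<omega> \<Delta>"
proof -
  have "\<tau> 0 = 0" if "\<tau> \<in> \<Delta>" for \<tau>
    using positive_functional_scaleR[OF tracial_state_positive, of \<tau> 0 0] that \<Delta>_tracial by auto
  then have "(\<lambda>\<tau>. Re (\<tau> (st 0 * 0))) ` \<Delta> \<subseteq> {0}" by force
  then have "sup0 ((\<lambda>\<tau>. Re (\<tau> (st 0 * 0))) ` \<Delta>) = 0"
    unfolding sup0_def by (metis cSup_singleton subset_singletonD)
  moreover have "(\<lambda>n. 0::'a) \<in> linfty" unfolding linfty_def by auto
  ultimately show ?thesis unfolding J2_def by simp
qed

context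
  fixes \<tau>s :: "nat \<Rightarrow> 'a \<Rightarrow> complex" and \<tau> :: "'a \<Rightarrow> complex"
  assumes \<tau>s_in: "\<And>n. \<tau>s n \<in> \<Delta>" and \<tau>_in: "\<tau> \<in> \<Delta>" and \<tau>s_tendsto: "(\<tau>s \<longlongrightarrow> \<tau>) \<omega>"
begin

abbreviation trace_c :: "'a \<Rightarrow> complex" where
  "trace_c x \<equiv> ulim_trace \<omega> \<tau>s (\<lambda>n. x * c n)"

abbreviation trace_1c :: "'a \<Rightarrow> complex" where
  "trace_1c x \<equiv> ulim_trace \<omega> \<tau>s (\<lambda>n. x * (1 - c n))"

lemma tendsto_trace_c: "((\<lambda>n. \<tau>s n (x * c n)) \<longlongrightarrow> trace_c x) \<omega>"
  by (rule tendsto_ulim_trace[OF \<tau>s_in linfty_mult_left[OF c_bounded]])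

lemma tendsto_trace_1c: "((\<lambda>n. \<tau>s n (x * (1 - c n))) \<longlongrightarrow> trace_1c x) \<omega>"
  by (rule tendsto_ulim_trace[OF \<tau>s_in linfty_mult_left[OF linfty_one_minus[OF c_bounded]]])

lemma tendsto_trace: "((\<lambda>n. \<tau>s n x) \<longlongrightarrow> \<tau> x) \<omega>"
  using continuous_on_tendsto_compose[OF continuous_on_product_coordinates[of x] \<tau>s_tendsto] by simp

lemma positive_functional_\<tau>s: "positive_functional (\<tau>s n)"
  using \<tau>s_in \<Delta>_tracial tracial_state_positive by blast

lemma trace_1c_eq: "trace_1c x = \<tau> x - trace_c x"
proof -
  have "((\<lambda>n. \<tau>s n (x * (1 - c n))) \<longlongrightarrow> \<tau> x - trace_c x) \<omega>"
    using tendsto_diff[OF tendsto_trace tendsto_trace_c]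
    by (simp add: right_diff_distrib positive_functional_diff[OF positive_functional_\<tau>s])
  then show ?thesis
    by (rule tendsto_unique[OF free_ultrafilter_nontrivial[OF ultra] tendsto_trace_1c])
qed

text \<open>Modulo \<open>J2\<close>, \<open>c = d\<^sup>* d\<close>; so \<open>trace_c\<close> is also the limit of the positive functionals
  \<open>x \<mapsto> \<tau>s n (d\<^sub>n\<^sup>* d\<^sub>n x)\<close>.\<close>
lemma positive_functional_trace_c: "positive_functional trace_c"
proof -
  obtain d where d: "d \<in> linfty" "(\<lambda>n. c n - st (d n) * d n) \<in> J2 st \<omega> \<Delta>"
    using c_positive_contraction unfolding quot_pos_contraction_def by blast
  have "((\<lambda>n. \<tau>s n (st (d n) * d n * x)) \<longlongrightarrow> trace_c x) \<omega>" for x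
  proof -
    have "((\<lambda>n. \<tau>s n (x * c n) - \<tau>s n (x * (c n - st (d n) * d n))) \<longlongrightarrow> trace_c x - 0) \<omega>"
      by (intro tendsto_diff tendsto_trace_c tendsto_trace_mult_J2[OF d(2) \<tau>s_in]) (auto simp: linfty_def)
    then show ?thesis
      by (simp add: positive_functional_diff[OF positive_functional_\<tau>s, symmetric] algebra_simps)
  qed
  then show ?thesis
    by (rule positive_functional_limit[OF free_ultrafilter_nontrivial[OF ultra]
          positive_functional_weighted[OF positive_functional_\<tau>s]])
qed

lemma trace_c_st_mult_self_le_linfty_norm:
  assumes j: "j \<in> J2 st \<omega> \<Delta>"
  shows "cmod (trace_c (st y * y)) \<le> Re (\<tau> (st y * y)) * linfty_norm (\<lambda>n. c n + j n)"
proof -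
  have bounded: "(\<lambda>n. c n + j n) \<in> linfty"
    using j c_bounded unfolding J2_def by (blast intro: linfty_add)
  have "((\<lambda>n. \<tau>s n (st y * y * c n) + \<tau>s n (st y * y * j n)) \<longlongrightarrow> trace_c (st y * y) + 0) \<omega>"
    by (intro tendsto_add tendsto_trace_c tendsto_trace_mult_J2[OF j \<tau>s_in]) (auto simp: linfty_def)
  then have lim: "((\<lambda>n. \<tau>s n (st y * y * (c n + j n))) \<longlongrightarrow> trace_c (st y * y)) \<omega>"
    by (simp add: distrib_left positive_functional_add[OF positive_functional_\<tau>s])
  have bound_lim: "((\<lambda>n. Re (\<tau>s n (st y * y)) * linfty_norm (\<lambda>n. c n + j n))
      \<longlongrightarrow> Re (\<tau> (st y * y)) * linfty_norm (\<lambda>n. c n + j n)) \<omega>"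
    by (intro tendsto_mult_right tendsto_Re tendsto_trace)
  have "cmod (\<tau>s n (st y * y * (c n + j n))) \<le> Re (\<tau>s n (st y * y)) * linfty_norm (\<lambda>n. c n + j n)"
    for n
    using positive_functional_weighted_norm_le[OF positive_functional_\<tau>s]
      mult_left_mono[OF norm_le_linfty_norm[OF bounded] positive_functional_Re[OF positive_functional_\<tau>s]]
    by (rule order_trans)
  then show ?thesis
    by (intro tendsto_le[OF free_ultrafilter_nontrivial[OF ultra] bound_lim tendsto_norm[OF lim]]) simp
qed

lemma trace_c_st_mult_self_le: "cmod (trace_c (st y * y)) \<le> Re (\<tau> (st y * y))"
proof -
  define S where "S = (\<lambda>j. linfty_norm (\<lambda>n. c n + j n)) ` J2 st \<omega> \<Delta>"
  have pos: "0 \<le> Re (\<tau> (st y * y))"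
    using \<tau>_in \<Delta>_tracial positive_functional_Re tracial_state_positive by blast
  have "cmod (trace_c (st y * y)) \<le> Re (\<tau> (st y * y)) * Inf S"
    unfolding S_def using zero_in_J2 pos trace_c_st_mult_self_le_linfty_norm
    by (intro le_mult_Inf) auto
  also have "\<dots> \<le> Re (\<tau> (st y * y))"
    using c_positive_contraction pos unfolding quot_pos_contraction_def S_def
    by (simp add: mult_left_le)
  finally show ?thesis .
qed

lemma positive_functional_trace_1c: "positive_functional trace_1c"
proof -
  have \<tau>: "positive_functional \<tau>" using \<tau>_in \<Delta>_tracial tracial_state_positive by blast
  have c: "positive_functional trace_c" by (rule positive_functional_trace_c)
  show ?thesis
    unfolding positive_functional_def trace_1c_eq
  proof (intro conjI allI)
    fix x y
    show "\<tau> (x + y) - trace_c (x + y) = \<tau> x - trace_c x + (\<tau> y - trace_c y)"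
      by (simp add: positive_functional_add[OF \<tau>] positive_functional_add[OF c])
  next
    fix z x
    show "\<tau> (scC z x) - trace_c (scC z x) = z * (\<tau> x - trace_c x)"
      by (simp add: positive_functional_scC[OF \<tau>] positive_functional_scC[OF c] right_diff_distrib)
  next
    fix x
    show "Im (\<tau> (st x * x) - trace_c (st x * x)) = 0"
      by (simp add: positive_functional_Im[OF \<tau>] positive_functional_Im[OF c])
    show "0 \<le> Re (\<tau> (st x * x) - trace_c (st x * x))"
      using complex_Re_le_cmod[of "trace_c (st x * x)"] trace_c_st_mult_self_le[of x] by simp
  qed
qed

lemma ulim_trace_c_unit_interval:
  "ulim_trace \<omega> \<tau>s c = complex_of_real (Re (ulim_trace \<omega> \<tau>s c))"
  "0 \<le> Re (ulim_trace \<omega> \<tau>s c)" "Re (ulim_trace \<omega> \<tau>s c) \<le> 1"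
proof -
  have "\<tau> 1 = 1" using \<tau>_in \<Delta>_tracial tracial_state_one by blast
  then have "trace_1c 1 = 1 - ulim_trace \<omega> \<tau>s c" using trace_1c_eq[of 1] by simp
  then show "ulim_trace \<omega> \<tau>s c = complex_of_real (Re (ulim_trace \<omega> \<tau>s c))"
    "0 \<le> Re (ulim_trace \<omega> \<tau>s c)" "Re (ulim_trace \<omega> \<tau>s c) \<le> 1"
    using positive_functional_one[OF positive_functional_trace_c]
      positive_functional_one[OF positive_functional_trace_1c]
    by (auto simp: complex_eq_iff)
qed

lemma trace_c_eq_mult:
  assumes extreme: "\<tau> \<in> fextreme_points \<Delta>"
  shows "trace_c x = ulim_trace \<omega> \<tau>s c * \<tau> x"
proof -
  define t where "t = ulim_trace \<omega> \<tau>s c"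
  define r where "r = Re t"
  have t: "t = complex_of_real r" "0 \<le> r" "r \<le> 1"
    unfolding r_def t_def by (fact ulim_trace_c_unit_interval)+
  have trace_1c_1: "trace_1c 1 = 1 - t"
    using trace_1c_eq[of 1] \<tau>_in \<Delta>_tracial tracial_state_one unfolding t_def by auto
  consider "r = 0" | "r = 1" | "0 < r" "r < 1" using t by linarith
  then show ?thesis
  proof cases
    case 1
    then have "trace_c 1 = 0" using t unfolding t_def by simp
    then show ?thesis
      using positive_functional_eq_zero[OF positive_functional_trace_c] t 1 unfolding t_def by simp
  next
    case 2
    then have "trace_1c 1 = 0" using t trace_1c_1 by simp
    then have "trace_1c x = 0" by (rule positive_functional_eq_zero[OF positive_functional_trace_1c])
    then show ?thesis using trace_1c_eq[of x] t 2 unfolding t_def by simp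
  next
    case 3
    then have ne: "t \<noteq> 0" "t \<noteq> 1" using t by auto
    moreover have "(t \<noteq> 0 \<longrightarrow> (\<lambda>x. trace_c x / t) \<in> \<Delta>) \<and> (t \<noteq> 1 \<longrightarrow> (\<lambda>x. trace_1c x / (1 - t)) \<in> \<Delta>)"
      using spec[OF c_ample[unfolded ample_def], of \<tau>s] \<tau>s_in unfolding t_def by blast
    ultimately have \<sigma>: "(\<lambda>x. trace_c x / t) \<in> \<Delta>" and \<rho>: "(\<lambda>x. trace_1c x / (1 - t)) \<in> \<Delta>"
      by blast+
    have "\<tau> y = complex_of_real r * (trace_c y / t) + complex_of_real (1 - r) * (trace_1c y / (1 - t))"
      for y using ne t(1) trace_1c_eq[of y] by simp
    then have "(\<lambda>x. trace_c x / t) = \<tau>"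
      by (intro fextreme_points_convex_combination[OF extreme \<sigma> \<rho> 3]) (simp add: fun_eq_iff)
    then have "trace_c x / t = \<tau> x" by (rule fun_cong)
    with ne(1) show ?thesis unfolding t_def by (simp add: divide_eq_eq mult.commute)
  qed
qed

end

lemma tendsto_trace_defect_zero:
  assumes compact: "compact (fextreme_points \<Delta>)" and \<tau>s: "\<And>k. \<tau>s k \<in> fextreme_points \<Delta>"
  shows "((\<lambda>k. \<tau>s k (a * c k) - \<tau>s k a * \<tau>s k (c k)) \<longlongrightarrow> 0) \<omega>"
proof -
  obtain \<tau> where \<tau>: "\<tau> \<in> fextreme_points \<Delta>" "(\<tau>s \<longlongrightarrow> \<tau>) \<omega>"
    by (rule free_ultrafilter_tendsto_compact[OF ultra compact \<tau>s])
  have in_\<Delta>: "\<And>k. \<tau>s k \<in> \<Delta>" "\<tau> \<in> \<Delta>" using \<tau>s \<tau>(1) unfolding fextreme_points_def by blast+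
  have "((\<lambda>k. \<tau>s k (a * c k) - \<tau>s k a * \<tau>s k (c k))
      \<longlongrightarrow> trace_c \<tau>s a - \<tau> a * ulim_trace \<omega> \<tau>s c) \<omega>"
    by (intro tendsto_diff tendsto_mult tendsto_trace_c[OF in_\<Delta> \<tau>(2)] tendsto_trace[OF in_\<Delta> \<tau>(2)]
        tendsto_ulim_trace[OF in_\<Delta>(1) c_bounded])
  then show ?thesis by (simp add: trace_c_eq_mult[OF in_\<Delta> \<tau>(2) \<tau>(1), of a])
qed

end

theorem lemma4p3:
  fixes scC :: "complex \<Rightarrow> 'a::{comm_ring_1,real_normed_algebra_1,banach} \<Rightarrow> 'a"
    and st :: "'a \<Rightarrow> 'a"
    and \<omega> :: "nat filter"
    and \<Delta> :: "('a \<Rightarrow> complex) set"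
    and c :: "nat \<Rightarrow> 'a"
  assumes "comm_cstar_alg scC st"
    and "free_ultrafilter \<omega>"
    and "\<Delta> \<subseteq> tracial_states scC st"
    and "closed \<Delta>"
    and "fconvex \<Delta>"
    and "compact (fextreme_points \<Delta>)"
    and "c \<in> linfty"
    and "quot_pos_contraction st (J2 st \<omega> \<Delta>) c"
    and "c \<notin> J2 st \<omega> \<Delta>"
    and "ample \<omega> \<Delta> c"
  shows "\<forall>a. ((\<lambda>k. sup0 ((\<lambda>\<tau>. cmod (\<tau> (a * c k) - \<tau> a * \<tau> (c k))) ` fextreme_points \<Delta>))
            \<longlongrightarrow> 0) \<omega>"
proof
  fix a
  interpret ample_trace_setting scC st \<omega> \<Delta> c
    using assms by (simp add: ample_trace_setting_def ample_trace_setting_axioms_def comm_cstar_def)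
  have extreme_tracial: "fextreme_points \<Delta> \<subseteq> tracial_states scC st"
    using assms(3) unfolding fextreme_points_def by blast
  show "((\<lambda>k. sup0 ((\<lambda>\<tau>. cmod (\<tau> (a * c k) - \<tau> a * \<tau> (c k))) ` fextreme_points \<Delta>)) \<longlongrightarrow> 0) \<omega>"
  proof (rule tendsto_sup0_zeroI)
    show "bdd_above ((\<lambda>\<tau>. cmod (\<tau> (a * c k) - \<tau> a * \<tau> (c k))) ` fextreme_points \<Delta>)" for k
      by (rule bdd_aboveI[where M = "2 * (norm a * norm (c k))"])
        (auto dest!: subsetD[OF extreme_tracial] intro: trace_defect_norm_le)
    show "((\<lambda>k. cmod (\<tau>s k (a * c k) - \<tau>s k a * \<tau>s k (c k))) \<longlongrightarrow> 0) \<omega>"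
      if "\<And>k. \<tau>s k \<in> fextreme_points \<Delta>" for \<tau>s
      using tendsto_norm_zero[OF tendsto_trace_defect_zero[OF assms(6) that]] .
  qed simp
qed

end
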